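(* Let $(\Omega,\mathcal{F},\mathbb{P})$ be a nonatomic probability space and let $(\mathcal{X},\mathcal{X}^\ast)$ be a pair of law-invariant vector subspaces of $L^1$, each containing $L^\infty$, such that $XY\in L^1$ for all $X\in\mathcal{X}$ and $Y\in\mathcal{X}^\ast$. Let $\mathcal{M}$ be a law-invariant linear subspace of $\mathcal{X}$ containing a nonconstant random variable, let $Y\in\mathcal{X}^\ast$, and define the linear functional $\varphi:\mathcal{M}\to\mathbb{R}$ by $\varphi(X)=\mathbb{E}_{\mathbb{P}}[XY]$. Then $\varphi$ is law invariant (i.e. $\varphi(X_1)=\varphi(X_2)$ whenever $X_1,X_2\in\mathcal{M}$ have the same law under $\mathbb{P}$) if and only if $Y$ is (a.s.) constant.
   Context: $L^0$ denotes real random variables modulo a.s. equality; "nonconstant" means not a.s. constant. A set $\mathcal{S}\subset L^0$ is law invariant if $X\in\mathcal{S}$ whenever $X\in L^0$ has the same law under $\mathbb{P}$ as some element of $\mathcal{S}$. *)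

theory Defs
  imports "HOL-Probability.Probability"
begin

text \<open>Law invariance
(which in particular forces closure under a.s. equality) is expressed via
equality of distributions.\<close>

definition nonatomic :: "'a measure \<Rightarrow> bool" where
  "nonatomic M \<longleftrightarrow> (\<forall>A\<in>sets M. measure M A > 0 \<longrightarrow>
      (\<exists>B\<in>sets M. B \<subseteq> A \<and> 0 < measure M B \<and> measure M B < measure M A))"

definition same_law :: "'a measure \<Rightarrow> ('a \<Rightarrow> real) \<Rightarrow> ('a \<Rightarrow> real) \<Rightarrow> bool" where
  "same_law M X Y \<longleftrightarrow> X \<in> borel_measurable M \<and> Y \<in> borel_measurable M \<and>
      distr M borel X = distr M borel Y"

definition law_invariant_set :: "'a measure \<Rightarrow> ('a \<Rightarrow> real) set \<Rightarrow> bool" where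
  "law_invariant_set M S \<longleftrightarrow>
     (\<forall>X Y. X \<in> borel_measurable M \<longrightarrow> Y \<in> S \<longrightarrow> same_law M X Y \<longrightarrow> X \<in> S)"

definition rv_subspace :: "'a measure \<Rightarrow> ('a \<Rightarrow> real) set \<Rightarrow> bool" where
  "rv_subspace M S \<longleftrightarrow> S \<subseteq> borel_measurable M \<and> (\<lambda>_. 0) \<in> S \<and>
     (\<forall>X\<in>S. \<forall>Y\<in>S. (\<lambda>\<omega>. X \<omega> + Y \<omega>) \<in> S) \<and>
     (\<forall>c::real. \<forall>X\<in>S. (\<lambda>\<omega>. c * X \<omega>) \<in> S)"

definition Linfty :: "'a measure \<Rightarrow> ('a \<Rightarrow> real) set" where
  "Linfty M = {X \<in> borel_measurable M. \<exists>C. AE \<omega> in M. \<bar>X \<omega>\<bar> \<le> C}"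

definition L1 :: "'a measure \<Rightarrow> ('a \<Rightarrow> real) set" where
  "L1 M = {X. integrable M X}"

definition as_constant :: "'a measure \<Rightarrow> ('a \<Rightarrow> real) \<Rightarrow> bool" where
  "as_constant M X \<longleftrightarrow> (\<exists>c. AE \<omega> in M. X \<omega> = c)"

definition law_invariant_functional ::
  "'a measure \<Rightarrow> ('a \<Rightarrow> real) set \<Rightarrow> (('a \<Rightarrow> real) \<Rightarrow> real) \<Rightarrow> bool" where
  "law_invariant_functional M S \<phi> \<longleftrightarrow>
     (\<forall>X1\<in>S. \<forall>X2\<in>S. same_law M X1 X2 \<longrightarrow> \<phi> X1 = \<phi> X2)"

end

theory Submission
  imports Defs
begin

text \<open>Suppose \<open>Y\<close> is not a.s. constant, and split the space at a level \<open>t\<close> of \<open>Y\<close>. By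
  Sierpinski's theorem a nonatomic space contains events \<open>B \<subseteq> {Y \<le> t}\<close> and \<open>C \<subseteq> {Y > t}\<close> of the
  same small probability \<open>r\<close>, and every event carries a uniform random variable. Gluing such
  uniforms gives two uniform variables \<open>U\<^sub>1, U\<^sub>2\<close> that agree off \<open>B \<union> C\<close>, with \<open>U\<^sub>1\<close> below \<open>r\<close> and
  \<open>U\<^sub>2\<close> above \<open>1 - r\<close> on \<open>B\<close>, and the other way round on \<open>C\<close>. Feeding them into the quantile
  function of a nonconstant \<open>X \<in> \<M>\<close> gives \<open>X\<^sub>1, X\<^sub>2\<close> with the law of \<open>X\<close>, hence in \<open>\<M>\<close>, such that
  \<open>(X\<^sub>1 - X\<^sub>2) (Y - t) \<ge> 0\<close> everywhere and \<open>> 0\<close> on \<open>C\<close>. Law invariance of the functional and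
  \<open>E X\<^sub>1 = E X\<^sub>2\<close> would make the expectation of this product vanish. Conversely, for constant \<open>Y\<close>
  the functional is a multiple of the expectation.\<close>

lemma exists_ge_half_SUP:
  fixes f :: "'b \<Rightarrow> real"
  assumes "x\<^sub>0 \<in> S" and "bdd_above (f ` S)" and "\<And>x. x \<in> S \<Longrightarrow> 0 \<le> f x"
  shows "\<exists>x\<in>S. (SUP x\<in>S. f x) \<le> 2 * f x"
proof (cases "(SUP x\<in>S. f x) \<le> 0")
  case True
  then show ?thesis using assms by force
next
  case False
  then have "(SUP x\<in>S. f x) / 2 < (SUP x\<in>S. f x)" by simp
  then obtain x where "x \<in> S" "(SUP x\<in>S. f x) / 2 < f x"
    using less_cSUP_iff[of S f] assms by blast
  then show ?thesis by (intro bexI[of _ x]) auto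
qed

lemma eq_of_abs_diff_le_half_pow:
  fixes a b c :: real
  assumes "\<And>n. \<bar>a - b\<bar> \<le> c * (1/2)^n"
  shows "a = b"
proof (rule ccontr)
  assume "a \<noteq> b"
  then have "0 < \<bar>a - b\<bar>" by simp
  moreover have "0 < c"
    using assms[of 0] calculation by simp
  ultimately obtain n where "(1/2)^n < \<bar>a - b\<bar> / c"
    using real_arch_pow_inv[of "\<bar>a - b\<bar> / c" "1/2"] by auto
  then show False
    using assms[of n] \<open>0 < c\<close> by (simp add: field_simps)
qed

lemma dyadic_floor_bounds:
  fixes x :: real and n :: nat
  assumes "0 \<le> x"
  defines "k \<equiv> nat \<lfloor>x * 2^n\<rfloor>"
  shows "real k / 2^n \<le> x" "x < real (Suc k) / 2^n"
    "x - (1/2)^n \<le> real k / 2^n" "real (Suc k) / 2^n \<le> x + (1/2)^n"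
proof -
  have k: "real k \<le> x * 2^n" "x * 2^n < real k + 1"
    using assms by (simp_all add: k_def of_nat_nat)
  then show "real k / 2^n \<le> x" "x < real (Suc k) / 2^n"
    by (simp_all add: field_simps)
  have "(x * 2^n - 1) / 2^n \<le> real k / 2^n" "real (Suc k) / 2^n \<le> (x * 2^n + 1) / 2^n"
    by (rule divide_right_mono, use k in linarith, simp)+
  then show "x - (1/2)^n \<le> real k / 2^n" "real (Suc k) / 2^n \<le> x + (1/2)^n"
    by (simp_all add: diff_divide_distrib add_divide_distrib power_one_over)
qed

context prob_space
begin

lemma nonatomic_exists_subset_less:
  assumes na: "nonatomic M" and A: "A \<in> sets M" "0 < prob A" and e: "0 < e"
  shows "\<exists>B\<in>sets M. B \<subseteq> A \<and> 0 < prob B \<and> prob B < e"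
proof -
  have "\<exists>B\<in>sets M. B \<subseteq> A \<and> 0 < prob B \<and> prob B \<le> (1/2)^n" for n
  proof (induction n)
    case 0
    then show ?case using A prob_le_1 by (intro bexI[of _ A]) auto
  next
    case (Suc n)
    then obtain B where B: "B \<in> sets M" "B \<subseteq> A" "0 < prob B" "prob B \<le> (1/2)^n"
      by blast
    then obtain C where C: "C \<in> sets M" "C \<subseteq> B" "0 < prob C" "prob C < prob B"
      using na unfolding nonatomic_def by blast
    have diff: "prob (B - C) = prob B - prob C"
      using C B by (intro finite_measure_Diff) auto
    show ?case
    proof (cases "prob C \<le> prob B / 2")
      case True
      then have "prob C \<le> (1/2)^Suc n" using B(4) by simp
      then show ?thesis using C B(2) by (intro bexI[of _ C]) auto
    next
      case False
      then have "prob (B - C) \<le> (1/2)^Suc n" using B(4) diff by simp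
      moreover have "0 < prob (B - C)" using C(4) diff by simp
      ultimately show ?thesis using B C(1) by (intro bexI[of _ "B - C"]) auto
    qed
  qed
  moreover obtain n where "(1/2::real)^n < e"
    using real_arch_pow_inv[OF e, of "1/2"] by auto
  ultimately show ?thesis by (meson order.strict_trans1)
qed

lemma exists_greedy_exhaustion:
  assumes A: "A \<in> sets M" and s: "0 \<le> s"
  obtains Bs where "incseq Bs" "\<And>n. Bs n \<in> sets M" "\<And>n. Bs n \<subseteq> A" "\<And>n. prob (Bs n) \<le> s"
    "\<And>n C. C \<in> sets M \<Longrightarrow> C \<subseteq> A - Bs n \<Longrightarrow> prob (Bs n) + prob C \<le> s \<Longrightarrow>
      prob C \<le> 2 * (prob (Bs (Suc n)) - prob (Bs n))"
proof -
  define T where "T B = {C \<in> sets M. C \<subseteq> A - B \<and> prob B + prob C \<le> s}" for B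
  have "\<exists>C\<in>T B. (SUP C\<in>T B. prob C) \<le> 2 * prob C" if "prob B \<le> s" for B
    using that by (intro exists_ge_half_SUP[of "{}"]) (auto simp: T_def intro!: bdd_aboveI[of _ 1])
  then obtain step
    where step: "\<And>B. prob B \<le> s \<Longrightarrow> step B \<in> T B \<and> (SUP C\<in>T B. prob C) \<le> 2 * prob (step B)"
    by metis
  define Bs where "Bs n = ((\<lambda>B. B \<union> step B) ^^ n) {}" for n
  have Bs_Suc: "Bs (Suc n) = Bs n \<union> step (Bs n)" for n
    by (simp add: Bs_def)
  have Bs: "Bs n \<in> sets M \<and> Bs n \<subseteq> A \<and> prob (Bs n) \<le> s" for n
  proof (induction n)
    case 0
    then show ?case using s by (simp add: Bs_def)
  next
    case (Suc n)
    then have "step (Bs n) \<in> T (Bs n)" using step by blast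
    moreover have "prob (Bs n \<union> step (Bs n)) = prob (Bs n) + prob (step (Bs n))"
      using calculation Suc by (intro finite_measure_Union) (auto simp: T_def)
    ultimately show ?case using Suc by (auto simp: T_def Bs_Suc)
  qed
  have "prob (Bs (Suc n)) = prob (Bs n) + prob (step (Bs n))" for n
    using Bs[of n] step[of "Bs n"] unfolding Bs_Suc
    by (intro finite_measure_Union) (auto simp: T_def)
  moreover have "prob C \<le> 2 * prob (step (Bs n))" if "C \<in> T (Bs n)" for n C
  proof -
    have "prob C \<le> (SUP C\<in>T (Bs n). prob C)"
      using that by (intro cSUP_upper) (auto intro!: bdd_aboveI[of _ 1])
    then show ?thesis using step[of "Bs n"] Bs by fastforce
  qed
  ultimately show ?thesis
    using that[of Bs] Bs by (auto simp: T_def Bs_Suc incseq_SucI)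
qed

text \<open>Sierpinski's theorem: if the greedy exhaustion fell short of \<open>s\<close>, a fixed positive piece
  would remain available at every step, so its probability would grow without bound.\<close>

lemma nonatomic_exists_subset_prob:
  assumes na: "nonatomic M" and A: "A \<in> sets M" and s: "0 \<le> s" "s \<le> prob A"
  shows "\<exists>B\<in>sets M. B \<subseteq> A \<and> prob B = s"
proof -
  obtain Bs where Bs: "incseq Bs" "\<And>n. Bs n \<in> sets M" "\<And>n. Bs n \<subseteq> A" "\<And>n. prob (Bs n) \<le> s"
    and greedy: "\<And>n C. C \<in> sets M \<Longrightarrow> C \<subseteq> A - Bs n \<Longrightarrow> prob (Bs n) + prob C \<le> s \<Longrightarrow>
      prob C \<le> 2 * (prob (Bs (Suc n)) - prob (Bs n))"
    using exists_greedy_exhaustion[OF A s(1)] by blast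
  define B where "B = (\<Union>n. Bs n)"
  have B: "B \<in> sets M" "B \<subseteq> A" "\<And>n. Bs n \<subseteq> B"
    using Bs by (auto simp: B_def)
  have "(\<lambda>n. prob (Bs n)) \<longlonglongrightarrow> prob B"
    unfolding B_def using Bs by (intro finite_Lim_measure_incseq) auto
  then have "prob B \<le> s"
    using Bs by (intro LIMSEQ_le_const2) auto
  moreover have "\<not> prob B < s"
  proof
    assume short: "prob B < s"
    have "0 < prob (A - B)"
      using finite_measure_Diff[OF A B(1,2)] short s by simp
    then obtain C where C: "C \<in> sets M" "C \<subseteq> A - B" "0 < prob C" "prob C < s - prob B"
      using nonatomic_exists_subset_less[OF na, of "A - B" "s - prob B"] short A B by auto
    have le_B: "prob (Bs n) \<le> prob B" for n
      using B by (intro finite_measure_mono) auto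
    have step: "prob C \<le> 2 * (prob (Bs (Suc n)) - prob (Bs n))" for n
      using C B(3)[of n] le_B[of n] by (intro greedy) auto
    have "real n * (prob C / 2) \<le> prob (Bs n)" for n
    proof (induction n)
      case (Suc n)
      then show ?case using step[of n] by (simp add: algebra_simps)
    qed (simp add: measure_nonneg)
    moreover obtain n where "2 / prob C < real n"
      using reals_Archimedean2 by blast
    then have "1 < real n * (prob C / 2)" using C(3) by (simp add: field_simps)
    ultimately show False using prob_le_1[of "Bs n"] by (smt (verit))
  qed
  ultimately show ?thesis using B by (intro bexI[of _ B]) auto
qed

lemma nonatomic_exists_between_prob:
  assumes na: "nonatomic M" and sets: "A \<in> sets M" "C \<in> sets M" and "A \<subseteq> C"
    and s: "prob A \<le> s" "s \<le> prob C"
  shows "\<exists>B\<in>sets M. A \<subseteq> B \<and> B \<subseteq> C \<and> prob B = s"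
proof -
  have "prob (C - A) = prob C - prob A"
    using assms by (intro finite_measure_Diff) auto
  then obtain D where D: "D \<in> sets M" "D \<subseteq> C - A" "prob D = s - prob A"
    using nonatomic_exists_subset_prob[OF na, of "C - A" "s - prob A"] sets s by auto
  have "prob (A \<union> D) = prob A + prob D"
    using D sets by (intro finite_measure_Union) auto
  then show ?thesis using D sets \<open>A \<subseteq> C\<close> by (intro bexI[of _ "A \<union> D"]) auto
qed

end

definition mid_event :: "'a measure \<Rightarrow> 'a set \<Rightarrow> 'a set \<Rightarrow> 'a set" where
  "mid_event M A C = (SOME B. B \<in> sets M \<and> A \<subseteq> B \<and> B \<subseteq> C \<and>
      measure M B = (measure M A + measure M C) / 2)"

text \<open>\<open>dyadic_event M E n k\<close> plays the role of \<open>{V \<le> k / 2^n}\<close> for the uniform variable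
  \<open>V = dyadic_uniform M E\<close> on \<open>E\<close>; level \<open>n + 1\<close> inserts mid events between neighbouring
  events of level \<open>n\<close>.\<close>

primrec dyadic_event :: "'a measure \<Rightarrow> 'a set \<Rightarrow> nat \<Rightarrow> nat \<Rightarrow> 'a set" where
  "dyadic_event M E 0 k = (if k = 0 then {} else E)"
| "dyadic_event M E (Suc n) k =
    (if even k then dyadic_event M E n (k div 2)
     else mid_event M (dyadic_event M E n (k div 2)) (dyadic_event M E n (k div 2 + 1)))"

definition dyadic_uniform :: "'a measure \<Rightarrow> 'a set \<Rightarrow> 'a \<Rightarrow> real" where
  "dyadic_uniform M E \<omega> =
    (INF nk. if \<omega> \<in> dyadic_event M E (fst nk) (snd nk) then real (snd nk) / 2 ^ fst nk else 1)"

lemma dyadic_event_shift: "dyadic_event M E (n + d) (k * 2^d) = dyadic_event M E n k"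
  by (induction d) (auto simp: mult.assoc[symmetric])

lemma dyadic_uniform_bdd_below:
  "bdd_below (range (\<lambda>nk.
    if \<omega> \<in> dyadic_event M E (fst nk) (snd nk) then real (snd nk) / 2 ^ fst nk else 1))"
  by (intro bdd_belowI[of _ 0]) auto

lemma dyadic_uniform_le:
  assumes "\<omega> \<in> dyadic_event M E n k"
  shows "dyadic_uniform M E \<omega> \<le> real k / 2^n"
  using cINF_lower[OF dyadic_uniform_bdd_below[of \<omega> M E], of "(n, k)"] assms
  by (simp add: dyadic_uniform_def)

context prob_space
begin

lemma mid_event:
  assumes na: "nonatomic M" and "A \<in> sets M" "C \<in> sets M" "A \<subseteq> C"
  shows "mid_event M A C \<in> sets M \<and> A \<subseteq> mid_event M A C \<and> mid_event M A C \<subseteq> C \<and>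
    prob (mid_event M A C) = (prob A + prob C) / 2"
proof -
  have "prob A \<le> prob C" using assms by (intro finite_measure_mono) auto
  then have "\<exists>B. B \<in> sets M \<and> A \<subseteq> B \<and> B \<subseteq> C \<and> prob B = (prob A + prob C) / 2"
    using nonatomic_exists_between_prob[OF assms, of "(prob A + prob C) / 2"] by auto
  then show ?thesis unfolding mid_event_def by (rule someI_ex)
qed

lemma dyadic_event:
  assumes na: "nonatomic M" and E: "E \<in> sets M"
  shows "dyadic_event M E n k \<in> sets M \<and> dyadic_event M E n k \<subseteq> E \<and>
    prob (dyadic_event M E n k) = real (min k (2^n)) / 2^n * prob E \<and>
    dyadic_event M E n k \<subseteq> dyadic_event M E n (Suc k)"
proof (induction n arbitrary: k)
  case 0
  then show ?case using E by auto
next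
  case (Suc n)
  define j where "j = k div 2"
  define A where "A = dyadic_event M E n j"
  define C where "C = dyadic_event M E n (Suc j)"
  have A: "A \<in> sets M" "A \<subseteq> E" "prob A = real (min j (2^n)) / 2^n * prob E" "A \<subseteq> C"
    and C: "C \<in> sets M" "C \<subseteq> E" "prob C = real (min (Suc j) (2^n)) / 2^n * prob E"
    using Suc.IH unfolding A_def C_def by auto
  note mid = mid_event[OF na A(1) C(1) A(4)]
  show ?case
  proof (cases "even k")
    case True
    then have "k = 2 * j" "Suc k div 2 = j" by (auto simp: j_def)
    moreover have "min (2 * j) (2 * 2^n) = 2 * min j (2^n)" by (simp add: min_def)
    ultimately have "dyadic_event M E (Suc n) k = A"
      "dyadic_event M E (Suc n) (Suc k) = mid_event M A C"
      "real (min k (2 ^ Suc n)) / 2 ^ Suc n = real (min j (2^n)) / 2^n"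
      using True by (simp_all add: A_def C_def)
    then show ?thesis using A mid by auto
  next
    case False
    then have "k = 2 * j + 1" "Suc k div 2 = Suc j" by (auto simp: j_def elim: oddE)
    moreover have "min j (2^n) + min (Suc j) (2^n) = min (2 * j + 1) (2 * 2^n)"
      by (simp add: min_def)
    ultimately have "real (min j (2^n)) + real (min (Suc j) (2^n)) = real (min k (2 ^ Suc n))"
      unfolding of_nat_add[symmetric] by simp
    moreover have "(prob A + prob C) / 2 =
        (real (min j (2^n)) + real (min (Suc j) (2^n))) / 2 ^ Suc n * prob E"
      unfolding A(3) C(3) by (simp add: field_simps)
    moreover have "dyadic_event M E (Suc n) k = mid_event M A C"
      "dyadic_event M E (Suc n) (Suc k) = C"
      using False \<open>Suc k div 2 = Suc j\<close> by (simp_all add: A_def C_def j_def)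
    ultimately show ?thesis using C mid by auto
  qed
qed

lemma dyadic_event_mono:
  assumes na: "nonatomic M" and E: "E \<in> sets M" and le: "real k / 2^m \<le> real j / 2^n"
  shows "dyadic_event M E m k \<subseteq> dyadic_event M E n j"
proof -
  have "real (k * 2^n) \<le> real (j * 2^m)"
    using le by (simp add: field_simps)
  then have "k * 2^n \<le> j * 2^m" by linarith
  have "dyadic_event M E m k = dyadic_event M E (m + n) (k * 2^n)"
    by (rule dyadic_event_shift[symmetric])
  also have "\<dots> \<subseteq> dyadic_event M E (m + n) (j * 2^m)"
    using dyadic_event[OF na E] lift_Suc_mono_le[of "dyadic_event M E (m + n)"] \<open>k * 2^n \<le> j * 2^m\<close>
    by blast
  also have "\<dots> = dyadic_event M E n j"
    using dyadic_event_shift[of M E n m j] by (simp add: add.commute)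
  finally show ?thesis .
qed

lemma dyadic_event_if_dyadic_uniform_less:
  assumes na: "nonatomic M" and E: "E \<in> sets M"
    and \<omega>: "\<omega> \<in> E" "dyadic_uniform M E \<omega> < real k / 2^n"
  shows "\<omega> \<in> dyadic_event M E n k"
proof -
  obtain nk where "(if \<omega> \<in> dyadic_event M E (fst nk) (snd nk) then real (snd nk) / 2 ^ fst nk
      else 1) < real k / 2^n"
    using \<omega>(2) cINF_less_iff[OF _ dyadic_uniform_bdd_below[of \<omega> M E]]
    unfolding dyadic_uniform_def by blast
  then obtain m j where less: "(if \<omega> \<in> dyadic_event M E m j then real j / 2^m else 1) < real k / 2^n"
    by blast
  show ?thesis
  proof (cases "\<omega> \<in> dyadic_event M E m j")
    case True
    then show ?thesis using less dyadic_event_mono[OF na E, of j m k n] by auto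
  next
    case False
    then have "real 1 / 2^0 \<le> real k / 2^n" using less by simp
    then show ?thesis using dyadic_event_mono[OF na E, of 1 0 k n] \<omega>(1) by auto
  qed
qed

lemma borel_measurable_dyadic_uniform:
  assumes na: "nonatomic M" and E: "E \<in> sets M"
  shows "dyadic_uniform M E \<in> borel_measurable M"
proof -
  have "(\<lambda>\<omega>. if \<omega> \<in> dyadic_event M E n k then real k / 2^n else 1) \<in> borel_measurable M" for n k
    using dyadic_event[OF na E] by (auto intro!: measurable_If_set)
  then show ?thesis
    unfolding dyadic_uniform_def by measurable
qed

lemma prob_dyadic_uniform_le:
  assumes na: "nonatomic M" and E: "E \<in> sets M" and x: "0 \<le> x" "x \<le> 1"
  shows "prob {\<omega>\<in>E. dyadic_uniform M E \<omega> \<le> x} = x * prob E"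
proof (rule eq_of_abs_diff_le_half_pow[where c = "prob E"])
  let ?D = "dyadic_event M E" and ?S = "{\<omega>\<in>E. dyadic_uniform M E \<omega> \<le> x}"
  note D = dyadic_event[OF na E]
  have S: "?S \<in> sets M"
    using E borel_measurable_dyadic_uniform[OF na E] by measurable
  fix n
  define k where "k = nat \<lfloor>x * 2^n\<rfloor>"
  note k = dyadic_floor_bounds[OF x(1), of n, folded k_def]
  have "real k \<le> x * 2^n"
    using k(1) by (simp add: divide_le_eq)
  moreover have "x * 2^n \<le> 2^n"
    using x(2) by simp
  ultimately have "k \<le> 2^n"
    by (metis order.trans of_nat_le_iff of_nat_numeral of_nat_power)
  have "?D n k \<subseteq> ?S"
    using D dyadic_uniform_le[of _ M E n k] k(1) by (fastforce intro: order.trans)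
  then have lower: "real k / 2^n * prob E \<le> prob ?S"
    using D[of n k] \<open>k \<le> 2^n\<close> S by (auto dest: finite_measure_mono)
  have "?S \<subseteq> ?D n (Suc k)"
    using dyadic_event_if_dyadic_uniform_less[OF na E, where n = n and k = "Suc k"] k(2)
    by fastforce
  then have "prob ?S \<le> prob (?D n (Suc k))"
    using S D by (intro finite_measure_mono) auto
  also have "\<dots> \<le> real (Suc k) / 2^n * prob E"
    using D[of n "Suc k"] by (auto intro!: mult_right_mono divide_right_mono)
  finally have upper: "prob ?S \<le> real (Suc k) / 2^n * prob E" .
  have "(x - (1/2)^n) * prob E \<le> real k / 2^n * prob E"
    "real (Suc k) / 2^n * prob E \<le> (x + (1/2)^n) * prob E"
    by (rule mult_right_mono[OF k(3) measure_nonneg], rule mult_right_mono[OF k(4) measure_nonneg])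
  then show "\<bar>prob ?S - x * prob E\<bar> \<le> prob E * (1/2)^n"
    using lower upper unfolding abs_le_iff left_diff_distrib distrib_right mult.commute[of "prob E"]
    by linarith
qed

text \<open>Uniform variables take values in the open unit interval everywhere, not merely almost
  surely, so that the quantile transform can be applied pointwise.\<close>

definition uniform_on :: "'a set \<Rightarrow> ('a \<Rightarrow> real) \<Rightarrow> bool" where
  "uniform_on E V \<longleftrightarrow> V \<in> borel_measurable M \<and> (\<forall>\<omega>. 0 < V \<omega> \<and> V \<omega> < 1) \<and>
     (\<forall>x. 0 \<le> x \<longrightarrow> x \<le> 1 \<longrightarrow> prob {\<omega>\<in>E. V \<omega> \<le> x} = x * prob E)"

lemma exists_uniform_on_if_linear_cdf:
  assumes E: "E \<in> sets M" and V[measurable]: "V \<in> borel_measurable M"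
    and cdf: "\<And>x. 0 \<le> x \<Longrightarrow> x \<le> 1 \<Longrightarrow> prob {\<omega>\<in>E. V \<omega> \<le> x} = x * prob E"
  shows "\<exists>U. uniform_on E U"
proof -
  have sets_le: "{\<omega>\<in>E. V \<omega> \<le> c} \<in> sets M" for c
    using E by measurable
  have "prob {\<omega>\<in>E. 1 \<le> V \<omega>} = 0"
  proof (rule eq_of_abs_diff_le_half_pow[where c = "prob E"])
    fix n
    have h: "(0::real) < (1/2)^n" "(1/2::real)^n \<le> 1" by (simp_all add: power_le_one)
    then have "{\<omega>\<in>E. 1 \<le> V \<omega>} \<subseteq> E - {\<omega>\<in>E. V \<omega> \<le> 1 - (1/2)^n}"
      by auto (use h in linarith)
    then have "prob {\<omega>\<in>E. 1 \<le> V \<omega>} \<le> prob (E - {\<omega>\<in>E. V \<omega> \<le> 1 - (1/2)^n})"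
      using E sets_le by (intro finite_measure_mono) auto
    also have "\<dots> = prob E - (1 - (1/2)^n) * prob E"
      using E h sets_le cdf[of "1 - (1/2)^n"] by (subst finite_measure_Diff) auto
    finally show "\<bar>prob {\<omega>\<in>E. 1 \<le> V \<omega>} - 0\<bar> \<le> prob E * (1/2)^n"
      by (simp add: algebra_simps)
  qed
  moreover have "prob {\<omega>\<in>E. V \<omega> \<le> 0} = 0"
    using cdf[of 0] by simp
  ultimately have "{\<omega>\<in>E. 1 \<le> V \<omega>} \<in> null_sets M" "{\<omega>\<in>E. V \<omega> \<le> 0} \<in> null_sets M"
    using E by (auto simp: null_sets_def emeasure_eq_measure)
  then have inside: "AE \<omega> in M. \<omega> \<in> E \<longrightarrow> 0 < V \<omega> \<and> V \<omega> < 1"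
    by (auto dest!: AE_not_in elim: AE_mp)
  define U where "U \<omega> = (if 0 < V \<omega> \<and> V \<omega> < 1 then V \<omega> else 1/2)" for \<omega>
  have U_measurable[measurable]: "U \<in> borel_measurable M"
    unfolding U_def by measurable
  have "prob {\<omega>\<in>E. U \<omega> \<le> x} = prob {\<omega>\<in>E. V \<omega> \<le> x}" for x
  proof (rule finite_measure_eq_AE)
    show "AE \<omega> in M. \<omega> \<in> {\<omega>\<in>E. U \<omega> \<le> x} \<longleftrightarrow> \<omega> \<in> {\<omega>\<in>E. V \<omega> \<le> x}"
      using inside by eventually_elim (auto simp: U_def)
    show "{\<omega>\<in>E. U \<omega> \<le> x} \<in> sets M" using E by measurable
    show "{\<omega>\<in>E. V \<omega> \<le> x} \<in> sets M" using E by measurable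
  qed
  moreover have "0 < U \<omega> \<and> U \<omega> < 1" for \<omega>
    by (simp add: U_def)
  ultimately have "uniform_on E U"
    using cdf U_measurable by (simp add: uniform_on_def)
  then show ?thesis by blast
qed

lemma nonatomic_exists_uniform_on:
  assumes "nonatomic M" and "E \<in> sets M"
  shows "\<exists>U. uniform_on E U"
  using exists_uniform_on_if_linear_cdf[OF assms(2) borel_measurable_dyadic_uniform[OF assms]]
    prob_dyadic_uniform_le[OF assms] by blast

lemma uniform_on_cdf:
  assumes E: "E \<in> sets M" and U: "uniform_on E U"
  shows "prob {\<omega>\<in>E. U \<omega> \<le> x} = max 0 (min x 1) * prob E"
proof -
  have "0 < U \<omega>" "U \<omega> < 1" for \<omega>
    using U by (auto simp: uniform_on_def)
  then have "x < 0 \<Longrightarrow> \<not> U \<omega> \<le> x" "1 < x \<Longrightarrow> U \<omega> \<le> x" for \<omega>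
    by (smt (verit))+
  then show ?thesis
    using U by (cases "x < 0"; cases "1 < x") (auto simp: uniform_on_def)
qed

lemma uniform_on_affine_cdf:
  assumes E: "E \<in> sets M" and U: "uniform_on E U" and a: "prob E = a"
  shows "prob {\<omega>\<in>E. b + a * U \<omega> \<le> x} = max 0 (min (x - b) a)"
proof (cases "a = 0")
  case True
  have [measurable]: "U \<in> borel_measurable M"
    using U by (simp add: uniform_on_def)
  have "prob {\<omega>\<in>E. b + a * U \<omega> \<le> x} \<le> prob E"
    using E by (intro finite_measure_mono) measurable
  then have "prob {\<omega>\<in>E. b + a * U \<omega> \<le> x} = 0"
    using True a by (simp add: order_antisym)
  then show ?thesis using True by simp
next
  case False
  then have "0 < a" using a measure_nonneg[of M E] by simp
  then have "{\<omega>\<in>E. b + a * U \<omega> \<le> x} = {\<omega>\<in>E. U \<omega> \<le> (x - b) / a}"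
    by (auto simp: field_simps)
  moreover have "max 0 (min ((x - b) / a) 1) * a = max 0 (min (x - b) a)"
    using \<open>0 < a\<close> by (auto simp: max_def min_def field_simps)
  ultimately show ?thesis using uniform_on_cdf[OF E U] a by simp
qed

end

definition glue_uniforms ::
  "'a set \<Rightarrow> 'a set \<Rightarrow> real \<Rightarrow> ('a \<Rightarrow> real) \<Rightarrow> ('a \<Rightarrow> real) \<Rightarrow> ('a \<Rightarrow> real) \<Rightarrow> 'a \<Rightarrow> real" where
  "glue_uniforms B C r V\<^sub>B V\<^sub>C W \<omega> =
    (if \<omega> \<in> B then r * V\<^sub>B \<omega> else if \<omega> \<in> C then 1 - r + r * V\<^sub>C \<omega> else r + (1 - 2 * r) * W \<omega>)"

lemma glue_uniforms_bounds:
  assumes r: "0 < r" "2 * r \<le> 1"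
    and V: "0 < V\<^sub>B \<omega>" "V\<^sub>B \<omega> < 1" "0 < V\<^sub>C \<omega>" "V\<^sub>C \<omega> < 1" "0 < W \<omega>" "W \<omega> < 1"
  shows "0 < glue_uniforms B C r V\<^sub>B V\<^sub>C W \<omega> \<and> glue_uniforms B C r V\<^sub>B V\<^sub>C W \<omega> < 1"
proof -
  have "0 < r * V\<^sub>B \<omega>" "r * V\<^sub>B \<omega> < r" "0 < r * V\<^sub>C \<omega>" "r * V\<^sub>C \<omega> < r"
    "0 \<le> (1 - 2 * r) * W \<omega>" "(1 - 2 * r) * W \<omega> \<le> 1 - 2 * r"
    using V r by (simp_all add: mult_left_le)
  moreover have "glue_uniforms B C r V\<^sub>B V\<^sub>C W \<omega> \<in> {r * V\<^sub>B \<omega>, 1 - r + r * V\<^sub>C \<omega>, r + (1 - 2 * r) * W \<omega>}"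
    by (simp add: glue_uniforms_def)
  ultimately show ?thesis
    using r by (elim insertE; intro conjI; simp only: empty_iff; linarith)
qed

text \<open>The generalised inverse of the distribution function; its value is junk outside
  \<open>0 < u < 1\<close>.\<close>

definition quantile :: "real measure \<Rightarrow> real \<Rightarrow> real" where
  "quantile N u = Inf {x. u \<le> cdf N x}"

lemma quantile_le_iff:
  assumes "real_distribution N" and "0 < u" "u < 1"
  shows "quantile N u \<le> x \<longleftrightarrow> u \<le> cdf N x"
proof -
  interpret cdf_distribution N
    using assms(1) by (rule cdf_distribution.intro)
  show ?thesis
    unfolding quantile_def using pseudoinverse[OF assms(2,3), of x] by (rule sym)
qed

lemma same_law_integral:
  assumes "same_law M X Y"
  shows "integral\<^sup>L M X = integral\<^sup>L M Y"
proof -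
  have X: "X \<in> borel_measurable M" and Y: "Y \<in> borel_measurable M"
    and law: "distr M borel X = distr M borel Y"
    using assms by (auto simp: same_law_def)
  have "integral\<^sup>L M X = integral\<^sup>L (distr M borel X) (\<lambda>x. x)"
    using X by (simp add: integral_distr)
  also have "\<dots> = integral\<^sup>L M Y"
    unfolding law using Y by (simp add: integral_distr)
  finally show ?thesis .
qed

context prob_space
begin

lemma uniform_on_glue_uniforms:
  assumes B: "B \<in> sets M" and C: "C \<in> sets M" and disj: "B \<inter> C = {}"
    and PB: "prob B = r" and PC: "prob C = r" and r: "0 < r"
    and V\<^sub>B: "uniform_on B V\<^sub>B" and V\<^sub>C: "uniform_on C V\<^sub>C" and W: "uniform_on (space M - (B \<union> C)) W"
  shows "uniform_on (space M) (glue_uniforms B C r V\<^sub>B V\<^sub>C W)"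
proof -
  define D where "D = space M - (B \<union> C)"
  have [measurable]: "B \<in> sets M" "C \<in> sets M" "D \<in> sets M"
    using B C by (auto simp: D_def)
  have [measurable]: "V\<^sub>B \<in> borel_measurable M" "V\<^sub>C \<in> borel_measurable M" "W \<in> borel_measurable M"
    using V\<^sub>B V\<^sub>C W by (auto simp: uniform_on_def)
  have space: "B \<subseteq> space M" "C \<subseteq> space M"
    using B C by (simp_all add: sets.sets_into_space)
  have "prob D = prob (space M) - prob (B \<union> C)"
    unfolding D_def using B C space by (intro finite_measure_Diff) auto
  then have PD: "prob D = 1 - 2 * r"
    using finite_measure_Union[OF B C disj] PB PC prob_space by simp
  then have "2 * r \<le> 1"
    using measure_nonneg[of M D] by simp
  have "prob {\<omega>\<in>space M. glue_uniforms B C r V\<^sub>B V\<^sub>C W \<omega> \<le> x} = x" if x: "0 \<le> x" "x \<le> 1" for x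
  proof -
    define S\<^sub>B where "S\<^sub>B = {\<omega>\<in>B. 0 + r * V\<^sub>B \<omega> \<le> x}"
    define S\<^sub>C where "S\<^sub>C = {\<omega>\<in>C. (1 - r) + r * V\<^sub>C \<omega> \<le> x}"
    define S\<^sub>D where "S\<^sub>D = {\<omega>\<in>D. r + (1 - 2 * r) * W \<omega> \<le> x}"
    have "{\<omega>\<in>space M. glue_uniforms B C r V\<^sub>B V\<^sub>C W \<omega> \<le> x} = (S\<^sub>B \<union> S\<^sub>C) \<union> S\<^sub>D"
      using space disj by (auto simp: glue_uniforms_def S\<^sub>B_def S\<^sub>C_def S\<^sub>D_def D_def)
    moreover have "(S\<^sub>B \<union> S\<^sub>C) \<inter> S\<^sub>D = {}" "S\<^sub>B \<inter> S\<^sub>C = {}"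
      using disj by (auto simp: S\<^sub>B_def S\<^sub>C_def S\<^sub>D_def D_def)
    moreover have "S\<^sub>B \<in> sets M" "S\<^sub>C \<in> sets M" "S\<^sub>D \<in> sets M"
      unfolding S\<^sub>B_def S\<^sub>C_def S\<^sub>D_def by measurable
    ultimately have "prob {\<omega>\<in>space M. glue_uniforms B C r V\<^sub>B V\<^sub>C W \<omega> \<le> x} =
        prob S\<^sub>B + prob S\<^sub>C + prob S\<^sub>D"
      by (simp add: finite_measure_Union)
    also have "\<dots> = max 0 (min (x - 0) r) + max 0 (min (x - (1 - r)) r)
        + max 0 (min (x - r) (1 - 2 * r))"
      unfolding S\<^sub>B_def S\<^sub>C_def S\<^sub>D_def
      using uniform_on_affine_cdf[OF B V\<^sub>B PB] uniform_on_affine_cdf[OF C V\<^sub>C PC]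
        uniform_on_affine_cdf[OF \<open>D \<in> sets M\<close> W[folded D_def] PD] by presburger
    also have "\<dots> = x"
      using x r \<open>2 * r \<le> 1\<close> by (simp add: max_def min_def)
    finally show ?thesis .
  qed
  moreover have "0 < glue_uniforms B C r V\<^sub>B V\<^sub>C W \<omega> \<and> glue_uniforms B C r V\<^sub>B V\<^sub>C W \<omega> < 1" for \<omega>
    using V\<^sub>B V\<^sub>C W r \<open>2 * r \<le> 1\<close> by (intro glue_uniforms_bounds) (auto simp: uniform_on_def)
  moreover have "glue_uniforms B C r V\<^sub>B V\<^sub>C W \<in> borel_measurable M"
    unfolding glue_uniforms_def by measurable
  ultimately show ?thesis
    by (simp add: uniform_on_def prob_space)
qed

lemma nonatomic_exists_uniform_swap:
  assumes na: "nonatomic M" and B: "B \<in> sets M" and C: "C \<in> sets M" and disj: "B \<inter> C = {}"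
    and PB: "prob B = r" and PC: "prob C = r" and r: "0 < r"
  obtains U\<^sub>1 U\<^sub>2 where "uniform_on (space M) U\<^sub>1" "uniform_on (space M) U\<^sub>2"
    "\<And>\<omega>. \<omega> \<in> B \<Longrightarrow> U\<^sub>1 \<omega> < r \<and> 1 - r < U\<^sub>2 \<omega>"
    "\<And>\<omega>. \<omega> \<in> C \<Longrightarrow> U\<^sub>2 \<omega> < r \<and> 1 - r < U\<^sub>1 \<omega>"
    "\<And>\<omega>. \<omega> \<notin> B \<Longrightarrow> \<omega> \<notin> C \<Longrightarrow> U\<^sub>1 \<omega> = U\<^sub>2 \<omega>"
proof -
  obtain V\<^sub>B V\<^sub>C W where V\<^sub>B: "uniform_on B V\<^sub>B" and V\<^sub>C: "uniform_on C V\<^sub>C"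
    and W: "uniform_on (space M - (B \<union> C)) W"
    using nonatomic_exists_uniform_on[OF na B] nonatomic_exists_uniform_on[OF na C]
      nonatomic_exists_uniform_on[OF na, of "space M - (B \<union> C)"] B C by blast
  define U\<^sub>1 where "U\<^sub>1 = glue_uniforms B C r V\<^sub>B V\<^sub>C W"
  define U\<^sub>2 where "U\<^sub>2 = glue_uniforms C B r V\<^sub>C V\<^sub>B W"
  have U\<^sub>1: "uniform_on (space M) U\<^sub>1"
    unfolding U\<^sub>1_def using assms(2-) V\<^sub>B V\<^sub>C W by (rule uniform_on_glue_uniforms)
  have U\<^sub>2: "uniform_on (space M) U\<^sub>2"
    unfolding U\<^sub>2_def using C B disj PC PB r V\<^sub>C V\<^sub>B W
    by (intro uniform_on_glue_uniforms) (auto simp: Un_commute)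
  have bounds: "0 < V\<^sub>B \<omega>" "V\<^sub>B \<omega> < 1" "0 < V\<^sub>C \<omega>" "V\<^sub>C \<omega> < 1" for \<omega>
    using V\<^sub>B V\<^sub>C by (auto simp: uniform_on_def)
  have "U\<^sub>1 \<omega> < r \<and> 1 - r < U\<^sub>2 \<omega>" if "\<omega> \<in> B" for \<omega>
    using that disj r bounds by (auto simp: U\<^sub>1_def U\<^sub>2_def glue_uniforms_def)
  moreover have "U\<^sub>2 \<omega> < r \<and> 1 - r < U\<^sub>1 \<omega>" if "\<omega> \<in> C" for \<omega>
    using that disj r bounds by (auto simp: U\<^sub>1_def U\<^sub>2_def glue_uniforms_def)
  moreover have "U\<^sub>1 \<omega> = U\<^sub>2 \<omega>" if "\<omega> \<notin> B" "\<omega> \<notin> C" for \<omega>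
    using that by (simp add: U\<^sub>1_def U\<^sub>2_def glue_uniforms_def)
  ultimately show ?thesis
    using that U\<^sub>1 U\<^sub>2 by blast
qed

lemma cdf_distr:
  assumes "Z \<in> borel_measurable M"
  shows "cdf (distr M borel Z) x = prob {\<omega>\<in>space M. Z \<omega> \<le> x}"
  using assms by (simp add: cdf_def measure_distr vimage_def Int_def conj_commute)

lemma distr_quantile_uniform:
  assumes N: "real_distribution N" and U: "uniform_on (space M) U"
  shows "(\<lambda>\<omega>. quantile N (U \<omega>)) \<in> borel_measurable M"
    and "distr M borel (\<lambda>\<omega>. quantile N (U \<omega>)) = N"
proof -
  have [measurable]: "U \<in> borel_measurable M"
    using U by (simp add: uniform_on_def)
  have level: "{\<omega>\<in>space M. quantile N (U \<omega>) \<le> x} = {\<omega>\<in>space M. U \<omega> \<le> cdf N x}" for x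
    using U quantile_le_iff[OF N] by (auto simp: uniform_on_def)
  show meas: "(\<lambda>\<omega>. quantile N (U \<omega>)) \<in> borel_measurable M"
    unfolding borel_measurable_iff_le level by measurable
  have "0 \<le> cdf N x" "cdf N x \<le> 1" for x
    using N real_distribution.finite_borel_measure_M[OF N]
    by (simp_all add: finite_borel_measure.cdf_nonneg real_distribution.cdf_bounded_prob)
  then have "cdf (distr M borel (\<lambda>\<omega>. quantile N (U \<omega>))) x = cdf N x" for x
    using U by (simp add: cdf_distr[OF meas] level uniform_on_def prob_space)
  then show "distr M borel (\<lambda>\<omega>. quantile N (U \<omega>)) = N"
    using meas N by (intro cdf_unique) auto
qed

text \<open>If the distribution function only takes the values 0 and 1, the variable is a.s.
  equal to the median \<open>c\<close>: the distribution has no mass left of \<open>c\<close> and all of it up to \<open>c\<close>.\<close>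

lemma exists_cdf_strictly_between:
  assumes Z: "Z \<in> borel_measurable M" and nc: "\<not> as_constant M Z"
  shows "\<exists>y. 0 < cdf (distr M borel Z) y \<and> cdf (distr M borel Z) y < 1"
proof (rule ccontr)
  assume none: "\<not> ?thesis"
  define N where "N = distr M borel Z"
  interpret N: real_distribution N
    using Z by (simp add: N_def)
  have not_between: "\<not> (0 < cdf N y \<and> cdf N y < 1)" for y
    using none by (auto simp: N_def)
  have cdf_01: "cdf N y = 0 \<or> cdf N y = 1" for y
    using not_between[of y] N.cdf_nonneg[of y] N.cdf_bounded_prob[of y] by auto
  define c where "c = quantile N (1/2)"
  have "cdf N c = 1"
    using quantile_le_iff[OF N.real_distribution_axioms, of "1/2" c] cdf_01[of c] by (simp add: c_def)
  have "cdf N y = 0" if "y < c" for y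
    using quantile_le_iff[OF N.real_distribution_axioms, of "1/2" y] cdf_01[of y] that
    by (auto simp: c_def)
  then have "eventually (\<lambda>y. cdf N y = 0) (at_left c)"
    by (intro eventually_at_leftI[of "c - 1"]) auto
  then have "(cdf N \<longlongrightarrow> 0) (at_left c)"
    by (rule tendsto_eventually)
  then have "measure N {..<c} = 0"
    using N.cdf_at_left[of c] by (simp add: tendsto_unique[OF trivial_limit_at_left_real])
  moreover have "measure N {..c} = measure N {..<c} + measure N {c}"
    by (simp add: N.finite_measure_Union[symmetric] ivl_disj_un_singleton(2)[symmetric])
  ultimately have "prob {\<omega>\<in>space M. Z \<omega> = c} = 1"
    using \<open>cdf N c = 1\<close> Z
    by (simp add: N_def cdf_def measure_distr vimage_def Int_def conj_commute)
  then have "AE \<omega> in M. Z \<omega> = c"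
    by (auto dest: AE_prob_1)
  then show False
    using nc by (auto simp: as_constant_def)
qed

lemma nonatomic_exists_events_below_above:
  assumes na: "nonatomic M" and Y: "Y \<in> borel_measurable M" "\<not> as_constant M Y" and \<epsilon>: "0 < \<epsilon>"
  obtains t r B C where "0 < r" "r < \<epsilon>" "B \<in> sets M" "C \<in> sets M" "prob B = r" "prob C = r"
    "\<And>\<omega>. \<omega> \<in> B \<Longrightarrow> Y \<omega> \<le> t" "\<And>\<omega>. \<omega> \<in> C \<Longrightarrow> t < Y \<omega>"
proof -
  note [measurable] = Y(1)
  obtain t where t: "0 < cdf (distr M borel Y) t" "cdf (distr M borel Y) t < 1"
    using exists_cdf_strictly_between[OF Y] by blast
  define L where "L = {\<omega>\<in>space M. Y \<omega> \<le> t}"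
  define H where "H = {\<omega>\<in>space M. t < Y \<omega>}"
  have [measurable]: "L \<in> sets M"
    unfolding L_def by measurable
  have "H = space M - L"
    by (auto simp: L_def H_def)
  then have "prob H = 1 - prob L"
    by (simp add: prob_compl)
  moreover have "0 < prob L" "prob L < 1"
    using t by (simp_all add: L_def cdf_distr)
  ultimately have a: "0 < prob L" "0 < prob H"
    by simp_all
  have [measurable]: "H \<in> sets M"
    unfolding H_def by measurable
  define r where "r = min \<epsilon> (min (prob L) (prob H)) / 2"
  have r: "0 < r" "r < \<epsilon>" "r \<le> prob L" "r \<le> prob H"
    using a \<epsilon> by (auto simp: r_def)
  obtain B where "B \<in> sets M" "B \<subseteq> L" "prob B = r"
    using nonatomic_exists_subset_prob[OF na, of L r] r by auto
  moreover obtain C where "C \<in> sets M" "C \<subseteq> H" "prob C = r"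
    using nonatomic_exists_subset_prob[OF na, of H r] r by auto
  ultimately show ?thesis
    using that[of r B C t] r by (auto simp: L_def H_def)
qed

lemma not_AE_zero_if_pos:
  assumes "C \<in> sets M" "0 < prob C" "\<And>\<omega>. \<omega> \<in> C \<Longrightarrow> 0 < g \<omega>"
  shows "\<not> (AE \<omega> in M. g \<omega> = (0::real))"
proof
  assume "AE \<omega> in M. g \<omega> = 0"
  then have "AE \<omega> in M. \<omega> \<notin> C"
    by (rule eventually_mono) (use assms(3) in force)
  then show False
    using assms(1,2) by (simp add: AE_iff_null_sets measure_eq_0_null_sets)
qed

lemma exists_same_law_pair_ordered_by:
  assumes na: "nonatomic M"
    and X: "X \<in> borel_measurable M" "\<not> as_constant M X"
    and Y: "Y \<in> borel_measurable M" "\<not> as_constant M Y"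
  obtains X\<^sub>1 X\<^sub>2 t where "same_law M X\<^sub>1 X" "same_law M X\<^sub>2 X"
    "\<And>\<omega>. 0 \<le> (X\<^sub>1 \<omega> - X\<^sub>2 \<omega>) * (Y \<omega> - t)"
    "\<not> (AE \<omega> in M. (X\<^sub>1 \<omega> - X\<^sub>2 \<omega>) * (Y \<omega> - t) = 0)"
proof -
  define N where "N = distr M borel X"
  have N: "real_distribution N"
    using X by (simp add: N_def)
  obtain y\<^sub>0 where p: "0 < cdf N y\<^sub>0" "cdf N y\<^sub>0 < 1"
    using exists_cdf_strictly_between[OF X] by (auto simp: N_def)
  obtain t r B C where r: "0 < r" "r < min (cdf N y\<^sub>0) (1 - cdf N y\<^sub>0)"
    and B: "B \<in> sets M" "prob B = r" "\<And>\<omega>. \<omega> \<in> B \<Longrightarrow> Y \<omega> \<le> t"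
    and C: "C \<in> sets M" "prob C = r" "\<And>\<omega>. \<omega> \<in> C \<Longrightarrow> t < Y \<omega>"
    using nonatomic_exists_events_below_above[OF na Y, of "min (cdf N y\<^sub>0) (1 - cdf N y\<^sub>0)"] p
    by (metis diff_gt_0_iff_gt min_def)
  have "B \<inter> C = {}"
    using B(3) C(3) by force
  then obtain U\<^sub>1 U\<^sub>2 where U: "uniform_on (space M) U\<^sub>1" "uniform_on (space M) U\<^sub>2"
    and on_B: "\<And>\<omega>. \<omega> \<in> B \<Longrightarrow> U\<^sub>1 \<omega> < r \<and> 1 - r < U\<^sub>2 \<omega>"
    and on_C: "\<And>\<omega>. \<omega> \<in> C \<Longrightarrow> U\<^sub>2 \<omega> < r \<and> 1 - r < U\<^sub>1 \<omega>"
    and off: "\<And>\<omega>. \<omega> \<notin> B \<Longrightarrow> \<omega> \<notin> C \<Longrightarrow> U\<^sub>1 \<omega> = U\<^sub>2 \<omega>"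
    using nonatomic_exists_uniform_swap[OF na B(1) C(1) _ B(2) C(2) r(1)] by metis
  define X\<^sub>1 where "X\<^sub>1 = (\<lambda>\<omega>. quantile N (U\<^sub>1 \<omega>))"
  define X\<^sub>2 where "X\<^sub>2 = (\<lambda>\<omega>. quantile N (U\<^sub>2 \<omega>))"
  have "same_law M X\<^sub>1 X" "same_law M X\<^sub>2 X"
    using distr_quantile_uniform[OF N U(1)] distr_quantile_uniform[OF N U(2)] X(1)
    by (simp_all add: same_law_def X\<^sub>1_def X\<^sub>2_def N_def)
  have low: "quantile N (U \<omega>) \<le> y\<^sub>0" if "uniform_on (space M) U" "U \<omega> < r" for U \<omega>
    using quantile_le_iff[OF N, of "U \<omega>" y\<^sub>0] that r(2) by (auto simp: uniform_on_def)
  have high: "y\<^sub>0 < quantile N (U \<omega>)" if "uniform_on (space M) U" "1 - r < U \<omega>" for U \<omega>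
    using quantile_le_iff[OF N, of "U \<omega>" y\<^sub>0] that r(2) by (auto simp: uniform_on_def)
  define g where "g \<omega> = (X\<^sub>1 \<omega> - X\<^sub>2 \<omega>) * (Y \<omega> - t)" for \<omega>
  have pos_C: "0 < g \<omega>" if "\<omega> \<in> C" for \<omega>
    using low[OF U(2) conjunct1[OF on_C[OF that]]] high[OF U(1) conjunct2[OF on_C[OF that]]]
      C(3)[OF that] unfolding g_def X\<^sub>1_def X\<^sub>2_def by (intro mult_pos_pos; linarith)
  have "0 \<le> g \<omega>" for \<omega>
  proof (cases "\<omega> \<in> B")
    case True
    then show ?thesis
      using low[OF U(1) conjunct1[OF on_B[OF True]]] high[OF U(2) conjunct2[OF on_B[OF True]]]
        B(3)[OF True] unfolding g_def X\<^sub>1_def X\<^sub>2_def by (intro mult_nonpos_nonpos; linarith)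
  next
    case False
    then show ?thesis
      using pos_C[of \<omega>] off[of \<omega>] by (cases "\<omega> \<in> C") (auto simp: g_def X\<^sub>1_def X\<^sub>2_def)
  qed
  moreover have "\<not> (AE \<omega> in M. g \<omega> = 0)"
    using C r(1) pos_C by (intro not_AE_zero_if_pos) auto
  ultimately show ?thesis
    using that \<open>same_law M X\<^sub>1 X\<close> \<open>same_law M X\<^sub>2 X\<close> unfolding g_def by blast
qed

lemma law_invariant_functional_if_as_constant:
  assumes S: "S \<subseteq> borel_measurable M"
    and Y: "Y \<in> borel_measurable M" "as_constant M Y"
  shows "law_invariant_functional M S (\<lambda>X. integral\<^sup>L M (\<lambda>\<omega>. X \<omega> * Y \<omega>))"
  unfolding law_invariant_functional_def
proof (intro ballI impI)
  fix X\<^sub>1 X\<^sub>2 assume X: "X\<^sub>1 \<in> S" "X\<^sub>2 \<in> S" "same_law M X\<^sub>1 X\<^sub>2"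
  obtain c where c: "AE \<omega> in M. Y \<omega> = c"
    using Y by (auto simp: as_constant_def)
  have "integral\<^sup>L M (\<lambda>\<omega>. X \<omega> * Y \<omega>) = integral\<^sup>L M X * c" if "X \<in> S" for X
    using c that S Y(1) by (subst integral_cong_AE[where g = "\<lambda>\<omega>. X \<omega> * c"]) auto
  then show "integral\<^sup>L M (\<lambda>\<omega>. X\<^sub>1 \<omega> * Y \<omega>) = integral\<^sup>L M (\<lambda>\<omega>. X\<^sub>2 \<omega> * Y \<omega>)"
    using same_law_integral[OF X(3)] X(1,2) by simp
qed

lemma as_constant_if_law_invariant_functional:
  assumes na: "nonatomic M"
    and S: "law_invariant_set M S" "S \<subseteq> borel_measurable M"
    and X: "X \<in> S" "\<not> as_constant M X"
    and Y: "Y \<in> borel_measurable M"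
    and integrable: "\<And>Z. Z \<in> S \<Longrightarrow> integrable M Z" "\<And>Z. Z \<in> S \<Longrightarrow> integrable M (\<lambda>\<omega>. Z \<omega> * Y \<omega>)"
    and invariant: "law_invariant_functional M S (\<lambda>X. integral\<^sup>L M (\<lambda>\<omega>. X \<omega> * Y \<omega>))"
  shows "as_constant M Y"
proof (rule ccontr)
  assume "\<not> as_constant M Y"
  then obtain X\<^sub>1 X\<^sub>2 t where law: "same_law M X\<^sub>1 X" "same_law M X\<^sub>2 X"
    and nonneg: "\<And>\<omega>. 0 \<le> (X\<^sub>1 \<omega> - X\<^sub>2 \<omega>) * (Y \<omega> - t)"
    and nonzero: "\<not> (AE \<omega> in M. (X\<^sub>1 \<omega> - X\<^sub>2 \<omega>) * (Y \<omega> - t) = 0)"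
    using exists_same_law_pair_ordered_by[OF na _ X(2) Y] X(1) S(2) by blast
  have "X\<^sub>1 \<in> S" "X\<^sub>2 \<in> S"
    using law X(1) S(1) by (auto simp: law_invariant_set_def same_law_def)
  moreover have "same_law M X\<^sub>1 X\<^sub>2"
    using law by (simp add: same_law_def)
  ultimately have "integral\<^sup>L M (\<lambda>\<omega>. X\<^sub>1 \<omega> * Y \<omega>) = integral\<^sup>L M (\<lambda>\<omega>. X\<^sub>2 \<omega> * Y \<omega>)"
    "integral\<^sup>L M X\<^sub>1 = integral\<^sup>L M X\<^sub>2"
    using invariant same_law_integral by (auto simp: law_invariant_functional_def)
  then have "integral\<^sup>L M (\<lambda>\<omega>. (X\<^sub>1 \<omega> - X\<^sub>2 \<omega>) * (Y \<omega> - t)) = 0"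
    using integrable \<open>X\<^sub>1 \<in> S\<close> \<open>X\<^sub>2 \<in> S\<close> by (simp add: algebra_simps)
  moreover have "integrable M (\<lambda>\<omega>. (X\<^sub>1 \<omega> - X\<^sub>2 \<omega>) * (Y \<omega> - t))"
    using integrable \<open>X\<^sub>1 \<in> S\<close> \<open>X\<^sub>2 \<in> S\<close> by (simp add: algebra_simps)
  ultimately show False
    using nonzero nonneg by (simp add: integral_nonneg_eq_0_iff_AE AE_I2)
qed

end

theorem proposition4p2:
  fixes M :: "'a measure" and \<X> \<X>s \<M> :: "('a \<Rightarrow> real) set" and Y :: "'a \<Rightarrow> real"
  assumes "prob_space M" and "nonatomic M"
    and "rv_subspace M \<X>" and "law_invariant_set M \<X>"
    and "Linfty M \<subseteq> \<X>" and "\<X> \<subseteq> L1 M"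
    and "rv_subspace M \<X>s" and "law_invariant_set M \<X>s"
    and "Linfty M \<subseteq> \<X>s" and "\<X>s \<subseteq> L1 M"
    and "\<forall>X\<in>\<X>. \<forall>Z\<in>\<X>s. integrable M (\<lambda>\<omega>. X \<omega> * Z \<omega>)"
    and "rv_subspace M \<M>" and "law_invariant_set M \<M>" and "\<M> \<subseteq> \<X>"
    and "\<exists>X\<in>\<M>. \<not> as_constant M X"
    and "Y \<in> \<X>s"
  shows "law_invariant_functional M \<M> (\<lambda>X. integral\<^sup>L M (\<lambda>\<omega>. X \<omega> * Y \<omega>))
           \<longleftrightarrow> as_constant M Y"
proof -
  interpret prob_space M by fact
  have "Y \<in> borel_measurable M"
    using \<open>rv_subspace M \<X>s\<close> \<open>Y \<in> \<X>s\<close> by (auto simp: rv_subspace_def)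
  moreover have "\<M> \<subseteq> borel_measurable M"
    using \<open>rv_subspace M \<M>\<close> by (simp add: rv_subspace_def)
  moreover have "integrable M Z" "integrable M (\<lambda>\<omega>. Z \<omega> * Y \<omega>)" if "Z \<in> \<M>" for Z
    using that \<open>\<X> \<subseteq> L1 M\<close> \<open>\<M> \<subseteq> \<X>\<close> \<open>Y \<in> \<X>s\<close> \<open>\<forall>X\<in>\<X>. \<forall>Z\<in>\<X>s. integrable M (\<lambda>\<omega>. X \<omega> * Z \<omega>)\<close>
    by (auto simp: L1_def)
  moreover obtain X where "X \<in> \<M>" "\<not> as_constant M X"
    using \<open>\<exists>X\<in>\<M>. \<not> as_constant M X\<close> by blast
  ultimately show ?thesis
    using as_constant_if_law_invariant_functional[OF \<open>nonatomic M\<close> \<open>law_invariant_set M \<M>\<close>]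
      law_invariant_functional_if_as_constant by blast
qed

end
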